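(* With the convention $W_0(t)=2$, the generating function $W(t,z)=\sum_{n\ge 0}W_n(t)z^n$ is \[ W(t,z)=\frac{2-2z^2}{1-z-2z^2-2(t-1)z^3}. \]
   Context: Seating model. A circular table has $n\ge 1$ seats, with exactly one napkin between each pair of adjacent seats ($n$ napkins in total). "Left" and "right" are from the perspective of a seated diner. Diners $1,\dots,n$ arrive in this order and a maitre d' chooses a seat for each. A preference order is $\sigma=(\sigma_1,\dots,\sigma_n)\in\{-1,1\}^n$, where $\sigma_j=+1$ means diner $j$ prefers the napkin on their right and $\sigma_j=-1$ the napkin on their left. When diner $j$ is seated, they take their preferred adjacent napkin if it is still on the table; otherwise the other adjacent napkin if still on the table; otherwise they are napkinless. The maitre d' observes which napkin each seated diner takes. The "previous diner" means the most recently seated diner. Algorithm $W$ (trap setting). Seat diner 1; the primary direction $d\in\{\text{left},\text{right}\}$ is the side of the napkin diner 1 takes. All movement below is in direction $d$. (W1) If the two seats at distance 1 and 2 in direction $d$ from the previous diner's seat are both empty, go to W2; otherwise go to W4. (W2) If the previous diner took the napkin on their side $d$, seat the next diner two seats in direction $d$ from the previous diner and return to W1; otherwise go to W3. (W3) Seat the next diner one seat in direction $d$ from the previous diner and return to W1. (W4) Seat all remaining diners, one at a time in order of arrival, in the empty seats, in the order in which these seats are encountered moving in direction $d$ starting from diner 1's seat. For $n\ge1$, $\nu_W(\sigma)$ is the number of napkinless diners when the $n$ diners with preference order $\sigma$ are seated at the circular table with $n$ seats by algorithm $W$, and $W_n(t)=\sum_{\sigma\in\{-1,1\}^n}t^{\nu_W(\sigma)}$.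 *)

theory Defs
  imports Main "HOL-Computational_Algebra.Formal_Power_Series"
begin

text \<open>Napkin i lies between seat i and seat (i+1) mod n.
  For a diner at seat s, the right napkin is napkin s and the left napkin is napkin (s+n-1) mod n.  Preferences are +1 (right) / -1 (left).\<close>

definition mv :: "nat \<Rightarrow> nat \<Rightarrow> int \<Rightarrow> nat \<Rightarrow> nat" where
  "mv n s d k = nat ((int s + d * int k) mod int n)"

definition side_nap :: "nat \<Rightarrow> int \<Rightarrow> nat \<Rightarrow> nat" where
  "side_nap n d s = (if d = 1 then s else (s + n - 1) mod n)"

definition take_napkin :: "nat \<Rightarrow> nat set \<Rightarrow> nat \<Rightarrow> int \<Rightarrow> nat option" where
  "take_napkin n T s p =
     (let pr = side_nap n p s; ot = side_nap n (- p) s in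
      if pr \<notin> T then Some pr else if ot \<notin> T then Some ot else None)"

text \<open>Seat for the next diner, given occupied seats Occ, previous seat s, napkin taken by the previous
  diner pn, and whether we are already in step W4.  Returns the seat and the new W4 flag.\<close>
definition next_seat :: "nat \<Rightarrow> int \<Rightarrow> nat set \<Rightarrow> nat \<Rightarrow> nat option \<Rightarrow> bool \<Rightarrow> nat \<times> bool" where
  "next_seat n d Occ s pn w4 =
     (if \<not> w4 \<and> mv n s d 1 \<notin> Occ \<and> mv n s d 2 \<notin> Occ
      then (if pn = Some (side_nap n d s) then mv n s d 2 else mv n s d 1, False)
      else (mv n 0 d (LEAST k. 1 \<le> k \<and> mv n 0 d k \<notin> Occ), True))"

text \<open>State: occupied seats, taken napkins, previous seat, previous napkin, W4 flag, napkinless count.\<close>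
type_synonym wstate = "nat set \<times> nat set \<times> nat \<times> nat option \<times> bool \<times> nat"

fun run_W :: "nat \<Rightarrow> int \<Rightarrow> wstate \<Rightarrow> int list \<Rightarrow> wstate" where
  "run_W n d st [] = st"
| "run_W n d (Occ, T, s, pn, w4, c) (p # ps) =
     (let (s', w4') = next_seat n d Occ s pn w4;
          nap = take_napkin n T s' p
      in run_W n d (insert s' Occ, T \<union> set_option nap, s', nap, w4',
                    c + (if nap = None then 1 else 0)) ps)"

text \<open>Diner 1 sits at seat 0 (by rotational symmetry); the primary direction is the side of the napkin
  diner 1 takes, which is the preferred side sigma_1 since all napkins are present.\<close>
fun nu_W :: "int list \<Rightarrow> nat" where
  "nu_W [] = 0"
| "nu_W (p # ps) =
     (let n = Suc (length ps); nap1 = take_napkin n {} 0 p;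
          (_, _, _, _, _, c) = run_W n p ({0}, set_option nap1, 0, nap1, False, 0) ps
      in c)"

definition prefs :: "nat \<Rightarrow> int list set" where
  "prefs n = {xs. length xs = n \<and> set xs \<subseteq> {-1, 1}}"

definition W_poly :: "nat \<Rightarrow> real \<Rightarrow> real" where
  "W_poly n t = (\<Sum>\<sigma>\<in>prefs n. t ^ nu_W \<sigma>)"

definition W_gf :: "real \<Rightarrow> real fps" where
  "W_gf t = Abs_fps (\<lambda>n. if n = 0 then 2 else W_poly n t)"

end

theory Submission
  imports Defs "HOL-Library.Disjoint_Sets"
begin

(* Seat diner 1 at seat 0 and number seats and napkins by their distance from it in the primary
   direction d, napkin k lying between seats k and k + 1.  During W1-W3 a seat is skipped exactly
   when the previous diner took the napkin ahead, so the napkin behind the skipped seat is gone; the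
   seat becomes a trap if the next diner takes the napkin on its other side as well.  When W4
   starts, the napkin pairs of distinct empty seats are disjoint, so in W4 exactly the diners sent
   to traps go without a napkin, whatever their preferences.

   Summing t^(number of traps) over the preferences, diner by diner, gives weights A j and B j
   (j seats left ahead; the last diner did or did not take the napkin ahead) with
   A (j + 2) = 2 (A j + t B j) and B (j + 1) = A j + B j, the factor 2 being the free preference
   of the later occupant of a skipped seat, and W_n(t) = 2 A (n - 1).  Eliminating B gives
   A (j + 3) = A (j + 2) + 2 A (j + 1) + 2 (t - 1) A j, hence the denominator of W(t, z); the
   initial values W_0 = W_1 = 2, W_2 = 4 give the numerator. *)

unbundle fps_syntax

section \<open>Seats and napkins along the primary direction\<close>

definition seat :: "nat \<Rightarrow> int \<Rightarrow> nat \<Rightarrow> nat" where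
  "seat n d k = mv n 0 d k"

definition napkin :: "nat \<Rightarrow> int \<Rightarrow> nat \<Rightarrow> nat" where
  "napkin n d k = side_nap n d (seat n d k)"

definition adjacent_napkins :: "nat \<Rightarrow> nat \<Rightarrow> nat set" where
  "adjacent_napkins n e = {e, (e + n - 1) mod n}"

lemma int_seat: "n > 0 \<Longrightarrow> int (seat n d k) = (d * int k) mod int n"
  by (simp add: seat_def mv_def distrib_left)

lemma seat_less: "n > 0 \<Longrightarrow> seat n d k < n"
  by (simp add: seat_def mv_def nat_less_iff)

lemma seat_0 [simp]: "seat n d 0 = 0"
  by (simp add: seat_def mv_def)

lemma seat_self: "seat n d n = 0"
  by (simp add: seat_def mv_def)

lemma mv_seat: "n > 0 \<Longrightarrow> mv n (seat n d k) d j = seat n d (k + j)"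
  by (simp add: mv_def int_seat mod_add_left_eq distrib_left) (simp add: seat_def mv_def distrib_left)

lemma int_side_nap:
  "e < n \<Longrightarrow> int (side_nap n d e) = (int e - (if d = 1 then 0 else 1)) mod int n"
  by (auto simp: side_nap_def zmod_int of_nat_diff)
     (metis add.commute add_diff_eq mod_add_self1)

lemma int_napkin:
  "n > 0 \<Longrightarrow> int (napkin n d k) = (d * int k - (if d = 1 then 0 else 1)) mod int n"
  by (simp add: napkin_def int_side_nap seat_less int_seat mod_diff_left_eq)

lemma side_nap_opposite_seat_Suc:
  assumes "n > 0" "d \<in> {1, -1}"
  shows "side_nap n (-d) (seat n d (Suc k)) = napkin n d k"
proof -
  have "int (side_nap n (-d) (seat n d (Suc k))) = int (napkin n d k)"
    using assms
    by (auto simp: int_side_nap seat_less int_napkin int_seat mod_diff_left_eq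
        intro!: arg_cong[where f = "\<lambda>x. x mod int n"])
  then show ?thesis
    by simp
qed

lemma adjacent_napkins_eq_side_naps:
  "p \<in> {1, -1} \<Longrightarrow> adjacent_napkins n e = {side_nap n p e, side_nap n (-p) e}"
  by (auto simp: adjacent_napkins_def side_nap_def)

lemma adjacent_napkins_seat:
  assumes "n > 0" "d \<in> {1, -1}" "1 \<le> a"
  shows "adjacent_napkins n (seat n d a) = {napkin n d (a - 1), napkin n d a}"
proof -
  have "adjacent_napkins n (seat n d (Suc (a - 1))) = {napkin n d (Suc (a - 1)), napkin n d (a - 1)}"
    using adjacent_napkins_eq_side_naps[OF assms(2)] side_nap_opposite_seat_Suc[OF assms(1,2)]
    by (simp add: napkin_def)
  then show ?thesis
    using assms(3) by auto
qed

lemma inj_on_seat: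
  assumes "d \<in> {1, -1}"
  shows "inj_on (seat n d) {..<n}"
proof
  fix a b assume ab: "a \<in> {..<n}" "b \<in> {..<n}" "seat n d a = seat n d b"
  then have "(d * int a) mod int n = (d * int b) mod int n"
    by (simp flip: int_seat)
  then have "int a mod int n = int b mod int n"
    using assms mod_minus_cong[of "- int a" "int n" "- int b"] by auto
  then show "a = b"
    using ab by simp
qed

lemma inj_on_side_nap: "inj_on (side_nap n d) {..<n}"
proof
  fix a b assume ab: "a \<in> {..<n}" "b \<in> {..<n}" "side_nap n d a = side_nap n d b"
  define c :: int where "c = (if d = 1 then 0 else 1)"
  have "(int a - c) mod int n = (int b - c) mod int n"
    using ab int_side_nap[of a n d] int_side_nap[of b n d] by (simp add: c_def)
  then have "int a mod int n = int b mod int n"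
    using mod_add_cong[of "int a - c" "int n" "int b - c" c c] by simp
  then show "a = b"
    using ab by simp
qed

lemma seat_image: "d \<in> {1, -1} \<Longrightarrow> seat n d ` {..<n} = {..<n}"
  by (rule endo_inj_surj) (auto simp: seat_less inj_on_seat)

lemma diff_seat_image:
  "d \<in> {1, -1} \<Longrightarrow> A \<subseteq> {..<n} \<Longrightarrow> {..<n} - seat n d ` A = seat n d ` ({..<n} - A)"
  using inj_on_image_set_diff[OF inj_on_seat, where A = "{..<n}" and B = A] by (simp add: seat_image)

lemma inj_on_napkin:
  assumes "d \<in> {1, -1}"
  shows "inj_on (napkin n d) {..<n}"
proof -
  have "inj_on (side_nap n d \<circ> seat n d) {..<n}"
    using assms by (intro comp_inj_on) (simp_all add: inj_on_seat seat_image inj_on_side_nap)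
  then show ?thesis
    by (simp add: napkin_def[abs_def] comp_def)
qed

lemma napkin_neq:
  "d \<in> {1, -1} \<Longrightarrow> i < n \<Longrightarrow> i' < n \<Longrightarrow> i \<noteq> i' \<Longrightarrow> napkin n d i \<noteq> napkin n d i'"
  using inj_on_napkin[of d n] by (auto dest: inj_onD)

lemma seat_ahead_notin:
  assumes "d \<in> {1, -1}" "A \<subseteq> {..k}" "k < x" "x < n"
  shows "seat n d x \<notin> seat n d ` A"
proof
  assume "seat n d x \<in> seat n d ` A"
  then obtain y where y: "seat n d x = seat n d y" "y \<in> A"
    by blast
  then have "x = y"
    using inj_onD[OF inj_on_seat[OF assms(1)] y(1)] assms y by auto
  then show False
    using assms y by auto
qed

lemma napkin_ahead_notin:
  assumes "d \<in> {1, -1}" "T \<subseteq> napkin n d ` {..k}" "k < x" "x < n"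
  shows "napkin n d x \<notin> T"
proof
  assume "napkin n d x \<in> T"
  then obtain y where y: "napkin n d x = napkin n d y" "y \<le> k"
    using assms(2) by blast
  then have "x = y"
    using inj_onD[OF inj_on_napkin[OF assms(1)] y(1)] assms y by auto
  then show False
    using assms y by auto
qed

lemma disjoint_family_on_adjacent_napkins_seat:
  assumes d: "d \<in> {1, -1}" and A: "A \<subseteq> {1..<n}" and no_consecutive: "\<forall>a\<in>A. Suc a \<notin> A"
  shows "disjoint_family_on (adjacent_napkins n) (seat n d ` A)"
  unfolding disjoint_family_on_def
proof (intro ballI impI)
  fix e e' assume "e \<in> seat n d ` A" "e' \<in> seat n d ` A" "e \<noteq> e'"
  then obtain a a' where aa': "a \<noteq> a'" "a \<in> A" "a' \<in> A" and e: "e = seat n d a" "e' = seat n d a'"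
    by (elim imageE) (metis (no_types))
  then have bounds: "1 \<le> a" "a < n" "1 \<le> a'" "a' < n" and "Suc a \<noteq> a'" "Suc a' \<noteq> a"
    using A aa' no_consecutive[rule_format, of a] no_consecutive[rule_format, of a'] by auto
  then have "napkin n d i \<noteq> napkin n d i'" if "i \<in> {a - 1, a}" "i' \<in> {a' - 1, a'}" for i i'
    using that aa'(1) by (intro napkin_neq[OF d]) auto
  then show "adjacent_napkins n e \<inter> adjacent_napkins n e' = {}"
    unfolding e using bounds adjacent_napkins_seat[OF _ d] by simp
qed

lemma take_napkin_eq_None_iff:
  "p \<in> {1, -1} \<Longrightarrow> take_napkin n T e p = None \<longleftrightarrow> adjacent_napkins n e \<subseteq> T"
  using adjacent_napkins_eq_side_naps[of p n e] by (auto simp: take_napkin_def Let_def)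

lemma set_take_napkin_subset:
  "p \<in> {1, -1} \<Longrightarrow> set_option (take_napkin n T e p) \<subseteq> adjacent_napkins n e"
  using adjacent_napkins_eq_side_naps[of p n e] by (auto simp: take_napkin_def Let_def)

lemma take_napkin_seat_Suc:
  assumes "n > 0" "d \<in> {1, -1}" "p \<in> {d, -d}" "napkin n d k \<notin> T" "napkin n d (Suc k) \<notin> T"
  shows "take_napkin n T (seat n d (Suc k)) p = Some (if p = d then napkin n d (Suc k) else napkin n d k)"
proof (cases "p = d")
  case True
  then show ?thesis
    using assms(5) by (simp add: take_napkin_def napkin_def)
next
  case False
  then have "p = -d" "d \<noteq> -d"
    using assms(2,3) by auto
  then show ?thesis
    using assms(1,2,4) by (simp add: take_napkin_def side_nap_opposite_seat_Suc)
qed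

section \<open>Step W4\<close>

definition napkinless :: "wstate \<Rightarrow> nat" where
  "napkinless st = snd (snd (snd (snd (snd st))))"

lemma napkinless_conv [simp]: "napkinless (Occ, T, s, pn, w4, c) = c"
  by (simp add: napkinless_def)

lemma next_seat_W4:
  assumes "d \<in> {1, -1}" "Occ \<subseteq> {..<n}" "0 \<in> Occ" "Occ \<noteq> {..<n}"
    and "w4 \<or> mv n s d 1 \<in> Occ \<or> mv n s d 2 \<in> Occ"
  obtains e where "next_seat n d Occ s pn w4 = (e, True)" "e \<in> {..<n} - Occ"
proof -
  have n: "n > 0"
    using assms(2,3) by auto
  obtain e0 where "e0 \<in> {..<n}" "e0 \<notin> Occ"
    using assms(2,4) by blast
  then obtain k0 where k0: "k0 < n" "seat n d k0 \<notin> Occ"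
    using seat_image[OF assms(1), of n] by (metis imageE lessThan_iff)
  then have "1 \<le> k0"
    using assms(3) by (cases k0) auto
  define K where "K = (LEAST k. 1 \<le> k \<and> mv n 0 d k \<notin> Occ)"
  have "mv n 0 d K \<notin> Occ"
    unfolding K_def by (rule LeastI2[of _ k0]) (use k0 \<open>1 \<le> k0\<close> in \<open>auto simp: seat_def\<close>)
  moreover have "next_seat n d Occ s pn w4 = (mv n 0 d K, True)"
    using assms(5) unfolding next_seat_def K_def by auto
  moreover have "mv n 0 d K < n"
    using seat_less[OF n] by (simp add: seat_def)
  ultimately show thesis
    using that by blast
qed

lemma napkinless_run_W4:
  assumes "d \<in> {1, -1}" "Occ \<subseteq> {..<n}" "0 \<in> Occ" "set ps \<subseteq> {-1, 1}"
    and "length ps = card ({..<n} - Occ)"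
    and "disjoint_family_on (adjacent_napkins n) ({..<n} - Occ)"
    and "ps \<noteq> [] \<longrightarrow> w4 \<or> mv n s d 1 \<in> Occ \<or> mv n s d 2 \<in> Occ"
  shows "napkinless (run_W n d (Occ, T, s, pn, w4, c) ps)
           = c + card {e \<in> {..<n} - Occ. adjacent_napkins n e \<subseteq> T}"
  using assms(2-)
proof (induction ps arbitrary: Occ T s pn w4 c)
  case Nil
  then show ?case
    by simp
next
  case (Cons p ps)
  let ?E = "{..<n} - Occ"
  let ?A = "{e' \<in> ?E. adjacent_napkins n e' \<subseteq> T}"
  have "Occ \<noteq> {..<n}"
    using Cons.prems(4) by auto
  then obtain e where next_seat: "next_seat n d Occ s pn w4 = (e, True)" and e: "e \<in> ?E"
    using next_seat_W4[OF assms(1)] Cons.prems by blast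
  define nap where "nap = take_napkin n T e p"
  define c' where "c' = c + (if nap = None then 1 else 0)"
  have p: "p \<in> {1, -1}"
    using Cons.prems(3) by auto
  have E': "{..<n} - insert e Occ = ?E - {e}"
    by auto
  have "napkinless (run_W n d (Occ, T, s, pn, w4, c) (p # ps))
      = napkinless (run_W n d (insert e Occ, T \<union> set_option nap, e, nap, True, c') ps)"
    by (simp add: next_seat nap_def c'_def Let_def del: not_None_eq)
  also have "\<dots> = c' + card {e' \<in> ?E - {e}. adjacent_napkins n e' \<subseteq> T \<union> set_option nap}"
    using Cons.IH[of "insert e Occ"] Cons.prems e
    by (simp add: E' disjoint_family_on_mono[of "?E - {e}" ?E] card_Diff_singleton)
  also have "{e' \<in> ?E - {e}. adjacent_napkins n e' \<subseteq> T \<union> set_option nap} = ?A - {e}"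
    using set_take_napkin_subset[OF p, of n T e] Cons.prems(5) e
    by (fastforce simp: nap_def disjoint_family_on_def)
  also have "c' + card (?A - {e}) = c + card ?A"
  proof (cases "adjacent_napkins n e \<subseteq> T")
    case True
    then have "e \<in> ?A"
      using e by simp
    then show ?thesis
      using True take_napkin_eq_None_iff[OF p, of n T e] card.remove[of ?A e]
      by (simp add: c'_def nap_def)
  next
    case False
    then show ?thesis
      using take_napkin_eq_None_iff[OF p, of n T e] by (simp add: c'_def nap_def)
  qed
  finally show ?case .
qed

section \<open>The trap-setting steps W1--W3\<close>

lemma prefs_Suc: "prefs (Suc m) = Cons (-1) ` prefs m \<union> Cons 1 ` prefs m"
  by (auto simp: prefs_def length_Suc_conv)

lemma finite_prefs: "finite (prefs m)"
  using finite_lists_length_eq[of "{-1, 1 :: int}" m] by (simp add: prefs_def conj_commute)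

lemma card_prefs: "card (prefs m) = 2 ^ m"
  using card_lists_length_eq[of "{-1, 1 :: int}" m] by (simp add: prefs_def conj_commute numeral_2_eq_2)

lemma sum_prefs_Suc:
  "(\<Sum>xs\<in>prefs (Suc m). f xs) = (\<Sum>ps\<in>prefs m. f ((-1) # ps)) + (\<Sum>ps\<in>prefs m. f (1 # ps))"
  unfolding prefs_Suc by (subst sum.union_disjoint) (auto simp: finite_prefs sum.reindex)

(* A j and B j of the proof idea are phase_weight t True j and phase_weight t False j. *)
fun phase_weight :: "real \<Rightarrow> bool \<Rightarrow> nat \<Rightarrow> real" where
  "phase_weight t b 0 = 1"
| "phase_weight t True (Suc 0) = 2"
| "phase_weight t True (Suc (Suc j)) = 2 * (phase_weight t True j + t * phase_weight t False j)"
| "phase_weight t False (Suc j) = phase_weight t True j + phase_weight t False j"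

lemma phase_weight_le_one: "j \<le> 1 \<Longrightarrow> phase_weight t b j = 2 ^ j"
  by (cases b; cases j) auto

lemma phase_weight_True_rec:
  "phase_weight t True (j + 3) =
     phase_weight t True (j + 2) + 2 * phase_weight t True (j + 1) + 2 * (t - 1) * phase_weight t True j"
  by (simp add: numeral_3_eq_3 numeral_2_eq_2 algebra_simps)

(* The state of W once W1-W3 have seated a diner at seat k, skipping the seats in S; b tells
   whether that diner took napkin k (the one ahead) or napkin k - 1. *)
definition trap_state :: "nat \<Rightarrow> int \<Rightarrow> nat \<Rightarrow> bool \<Rightarrow> nat set \<Rightarrow> nat set \<Rightarrow> wstate" where
  "trap_state n d k b S T =
     (seat n d ` ({..k} - S), T, seat n d k, Some (napkin n d (if b then k else k - 1)), False, 0)"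

definition trap_inv :: "nat \<Rightarrow> int \<Rightarrow> nat \<Rightarrow> bool \<Rightarrow> nat set \<Rightarrow> nat set \<Rightarrow> bool" where
  "trap_inv n d k b S T \<longleftrightarrow>
     d \<in> {1, -1} \<and> k < n \<and> S \<subseteq> {1..<k} \<and> (\<forall>j\<in>S. Suc j \<notin> S) \<and>
     T \<subseteq> napkin n d ` {..k} \<and> (\<forall>j\<in>S. napkin n d (j - 1) \<in> T) \<and>
     (if b then napkin n d k \<in> T else 1 \<le> k \<and> napkin n d k \<notin> T)"

definition trapped_gaps :: "nat \<Rightarrow> int \<Rightarrow> nat set \<Rightarrow> nat set \<Rightarrow> nat set" where
  "trapped_gaps n d S T = {j \<in> S. napkin n d j \<in> T}"

lemma trapped_gaps_insert:
  "trapped_gaps n d (insert i S) T =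
     (if napkin n d i \<in> T then insert i (trapped_gaps n d S T) else trapped_gaps n d S T)"
  by (auto simp: trapped_gaps_def)

lemma trap_inv_initial: "p \<in> {1, -1} \<Longrightarrow> trap_inv (Suc m) p 0 True {} {napkin (Suc m) p 0}"
  by (simp add: trap_inv_def)

lemma nu_W_Cons_eq_trap_state:
  "nu_W (p # ps) =
     napkinless (run_W (Suc (length ps)) p
       (trap_state (Suc (length ps)) p 0 True {} {napkin (Suc (length ps)) p 0}) ps)"
  by (simp add: trap_state_def take_napkin_def napkin_def napkinless_def Let_def split: prod.split)

lemma next_seat_trap_state:
  assumes inv: "trap_inv n d k b S T" and ahead: "k + 2 < n"
  shows "next_seat n d (seat n d ` ({..k} - S)) (seat n d k) (Some (napkin n d (if b then k else k - 1)))
           False = (seat n d (if b then k + 2 else k + 1), False)"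
proof -
  have d: "d \<in> {1, -1}" and n: "n > 0"
    using inv ahead by (auto simp: trap_inv_def)
  have "seat n d (k + 1) \<notin> seat n d ` ({..k} - S)" "seat n d (k + 2) \<notin> seat n d ` ({..k} - S)"
    using ahead by (rule_tac[!] seat_ahead_notin[OF d]) auto
  moreover have "napkin n d (k - 1) \<noteq> napkin n d k" if "1 \<le> k"
    using that ahead by (intro napkin_neq[OF d]) auto
  ultimately show ?thesis
    using inv by (cases b) (simp_all add: next_seat_def mv_seat[OF n] trap_inv_def flip: napkin_def)
qed

lemma run_W_trap_step:
  assumes inv: "trap_inv n d k b S T" and ahead: "k + 2 < n" and p: "p \<in> {d, -d}"
    and j: "j = (if b then Suc k else k)"
  shows "run_W n d (trap_state n d k b S T) (p # ps) =
         run_W n d (trap_state n d (Suc j) (p = d) (if b then insert (Suc k) S else S)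
           (insert (if p = d then napkin n d (Suc j) else napkin n d j) T)) ps"
proof -
  have d: "d \<in> {1, -1}" and n: "n > 0" and S: "S \<subseteq> {1..<k}" and T: "T \<subseteq> napkin n d ` {..k}"
    using inv ahead by (auto simp: trap_inv_def)
  have "napkin n d j \<notin> T"
    using inv ahead napkin_ahead_notin[OF d T] by (auto simp: j trap_inv_def)
  moreover have "napkin n d (Suc j) \<notin> T"
    using ahead napkin_ahead_notin[OF d T] by (simp add: j)
  ultimately have "take_napkin n T (seat n d (Suc j)) p
      = Some (if p = d then napkin n d (Suc j) else napkin n d j)"
    by (rule take_napkin_seat_Suc[OF n d p])
  moreover have "next_seat n d (seat n d ` ({..k} - S)) (seat n d k)
      (Some (napkin n d (if b then k else k - 1))) False = (seat n d (Suc j), False)"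
    using next_seat_trap_state[OF inv ahead] by (simp add: j)
  moreover have "{..Suc j} - (if b then insert (Suc k) S else S) = insert (Suc j) ({..k} - S)"
    using S by (auto simp: j)
  ultimately show ?thesis
    by (simp add: trap_state_def)
qed

lemma trap_inv_step:
  assumes inv: "trap_inv n d k b S T" and ahead: "k + 2 < n"
    and j: "j = (if b then Suc k else k)"
  shows "trap_inv n d (Suc j) (p = d) (if b then insert (Suc k) S else S)
           (insert (if p = d then napkin n d (Suc j) else napkin n d j) T)"
proof -
  have d: "d \<in> {1, -1}" and T: "T \<subseteq> napkin n d ` {..k}"
    using inv by (auto simp: trap_inv_def)
  have "napkin n d (Suc j) \<notin> T"
    using ahead napkin_ahead_notin[OF d T] by (simp add: j)
  moreover have "napkin n d (Suc j) \<noteq> napkin n d j"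
    using ahead by (intro napkin_neq[OF d]) (auto simp: j)
  ultimately show ?thesis
    using inv ahead T by (auto simp: trap_inv_def j)
qed

lemma card_trapped_gaps_step:
  assumes inv: "trap_inv n d k b S T" and ahead: "k + 2 < n"
    and j: "j = (if b then Suc k else k)"
  shows "card (trapped_gaps n d (if b then insert (Suc k) S else S)
                 (insert (if p = d then napkin n d (Suc j) else napkin n d j) T))
           = card (trapped_gaps n d S T) + (if b \<and> p \<noteq> d then 1 else 0)"
proof -
  define nap where "nap = (if p = d then napkin n d (Suc j) else napkin n d j)"
  have d: "d \<in> {1, -1}" and S: "S \<subseteq> {1..<k}" and T: "T \<subseteq> napkin n d ` {..k}"
    using inv by (auto simp: trap_inv_def)
  have "napkin n d i \<noteq> nap" if "i \<in> S" for i
  proof -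
    have "i < j" "Suc j < n"
      using that S ahead by (auto simp: j)
    then show ?thesis
      using napkin_neq[OF d, where n = n and i = i and i' = j]
        napkin_neq[OF d, where n = n and i = i and i' = "Suc j"] by (auto simp: nap_def)
  qed
  then have old: "trapped_gaps n d S (insert nap T) = trapped_gaps n d S T"
    by (auto simp: trapped_gaps_def)
  have new: "napkin n d (Suc k) \<in> insert nap T \<longleftrightarrow> p \<noteq> d" if b
    using that ahead napkin_ahead_notin[OF d T, of "Suc k"]
      napkin_neq[OF d, where n = n and i = "Suc k" and i' = "Suc (Suc k)"]
    by (auto simp: nap_def j)
  have "finite (trapped_gaps n d S T)" "Suc k \<notin> trapped_gaps n d S T"
    using S by (auto simp: trapped_gaps_def intro: finite_subset)
  then show ?thesis
    using old new by (cases b) (simp_all add: trapped_gaps_insert flip: nap_def)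
qed

lemma card_trapped_seats:
  assumes inv: "trap_inv n d k b S T"
  shows "card {e \<in> seat n d ` (S \<union> {k<..<n}). adjacent_napkins n e \<subseteq> T} = card (trapped_gaps n d S T)"
proof -
  have d: "d \<in> {1, -1}" and S: "S \<subseteq> {1..<k}" and T: "T \<subseteq> napkin n d ` {..k}"
    and left_taken: "\<forall>j\<in>S. napkin n d (j - 1) \<in> T" and n: "n > 0"
    using inv by (auto simp: trap_inv_def)
  have U: "S \<union> {k<..<n} \<subseteq> {1..<n}"
    using inv S by (auto simp: trap_inv_def)
  have "adjacent_napkins n (seat n d a) \<subseteq> T \<longleftrightarrow> a \<in> trapped_gaps n d S T" if "a \<in> S \<union> {k<..<n}" for a
  proof -
    have "adjacent_napkins n (seat n d a) = {napkin n d (a - 1), napkin n d a}"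
      using that U by (intro adjacent_napkins_seat[OF n d]) auto
    then show ?thesis
      using that left_taken napkin_ahead_notin[OF d T, of a] by (auto simp: trapped_gaps_def)
  qed
  then have "{e \<in> seat n d ` (S \<union> {k<..<n}). adjacent_napkins n e \<subseteq> T} = seat n d ` trapped_gaps n d S T"
    by (auto simp: trapped_gaps_def)
  moreover have "inj_on (seat n d) (trapped_gaps n d S T)"
    by (rule inj_on_subset[OF inj_on_seat[OF d]]) (use U in \<open>auto simp: trapped_gaps_def\<close>)
  ultimately show ?thesis
    by (simp add: card_image)
qed

lemma napkinless_run_W_trap_end:
  assumes inv: "trap_inv n d k b S T" and stop: "n \<le> k + 2"
    and ps: "length ps = card S + (n - 1 - k)" "set ps \<subseteq> {-1, 1}"
  shows "napkinless (run_W n d (trap_state n d k b S T) ps) = card (trapped_gaps n d S T)"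
proof -
  have d: "d \<in> {1, -1}" and k: "k < n" and S: "S \<subseteq> {1..<k}"
    and no_consecutive: "\<forall>j\<in>S. Suc j \<notin> S"
    using inv by (auto simp: trap_inv_def)
  have n: "n > 0"
    using k by simp
  define Occ where "Occ = seat n d ` ({..k} - S)"
  define U where "U = S \<union> {k<..<n}"
  have U: "U \<subseteq> {1..<n}" "\<forall>a\<in>U. Suc a \<notin> U"
    using S k stop no_consecutive by (auto simp: U_def)
  have empty: "{..<n} - Occ = seat n d ` U"
    unfolding Occ_def using k S by (subst diff_seat_image[OF d]) (auto simp: U_def intro!: image_cong)
  have "card ({..<n} - Occ) = card U"
    unfolding empty by (rule card_image, rule inj_on_subset[OF inj_on_seat[OF d]]) (use U in auto)
  also have "card U = card S + (n - 1 - k)"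
    unfolding U_def using finite_subset[OF S] S by (subst card_Un_disjoint) auto
  finally have card: "card ({..<n} - Occ) = card S + (n - 1 - k)" .
  have "seat n d 0 \<in> Occ"
    unfolding Occ_def using S by (intro imageI) auto
  then have zero: "0 \<in> Occ"
    by simp
  have blocked: "mv n (seat n d k) d 1 \<in> Occ \<or> mv n (seat n d k) d 2 \<in> Occ"
    using k stop zero seat_self[of n d] by (auto simp: mv_seat[OF n] le_Suc_eq)
  have "Occ \<subseteq> {..<n}"
    using seat_less[OF n] by (auto simp: Occ_def)
  then have "napkinless (run_W n d (Occ, T, seat n d k, Some (napkin n d (if b then k else k - 1)), False, 0) ps)
      = 0 + card {e \<in> {..<n} - Occ. adjacent_napkins n e \<subseteq> T}"
    using disjoint_family_on_adjacent_napkins_seat[OF d U] ps(1) card blocked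
    by (intro napkinless_run_W4[OF d _ zero ps(2)]) (simp_all add: empty)
  then show ?thesis
    using card_trapped_seats[OF inv] by (simp add: trap_state_def Occ_def[symmetric] empty U_def)
qed

lemma sum_run_W_trap_end:
  assumes inv: "trap_inv n d k b S T" and stop: "n \<le> k + 2"
  shows "(\<Sum>ps\<in>prefs (card S + (n - 1 - k)). t ^ napkinless (run_W n d (trap_state n d k b S T) ps))
           = t ^ card (trapped_gaps n d S T) * 2 ^ card S * phase_weight t b (n - 1 - k)"
proof -
  have "napkinless (run_W n d (trap_state n d k b S T) ps) = card (trapped_gaps n d S T)"
    if "ps \<in> prefs (card S + (n - 1 - k))" for ps
    using that napkinless_run_W_trap_end[OF inv stop] by (simp add: prefs_def)
  then show ?thesis
    using stop by (simp add: card_prefs phase_weight_le_one power_add)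
qed

lemma phase_weight_step:
  assumes "k + 2 < n" and "j = (if b then Suc k else k)"
  shows "2 ^ (if b then 1 else 0) * (phase_weight t True (n - 1 - Suc j)
           + t ^ (if b then 1 else 0) * phase_weight t False (n - 1 - Suc j)) = phase_weight t b (n - 1 - k)"
proof (cases b)
  case True
  then have "n - 1 - k = Suc (Suc (n - 1 - Suc j))"
    using assms by simp
  then show ?thesis
    using True by simp
next
  case False
  then have "n - 1 - k = Suc (n - 1 - Suc j)"
    using assms by simp
  then show ?thesis
    using False by simp
qed

lemma card_trap_step_gaps:
  assumes "trap_inv n d k b S T"
  shows "card (if b then insert (Suc k) S else S) = card S + (if b then 1 else 0)"
proof -
  have "S \<subseteq> {1..<k}"
    using assms by (simp add: trap_inv_def)
  then have "finite S" "Suc k \<notin> S"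
    by (auto intro: finite_subset)
  then show ?thesis
    by simp
qed

lemma sum_run_W_trap_step:
  assumes inv: "trap_inv n d k b S T" and ahead: "k + 2 < n" and p: "p \<in> {d, -d}"
    and j: "j = (if b then Suc k else k)"
  defines "S' \<equiv> if b then insert (Suc k) S else S"
    and "T' \<equiv> insert (if p = d then napkin n d (Suc j) else napkin n d j) T"
  shows "(\<Sum>ps\<in>prefs (card S + (n - 1 - k) - 1). t ^ napkinless (run_W n d (trap_state n d k b S T) (p # ps)))
           = (\<Sum>ps\<in>prefs (card S' + (n - 1 - Suc j)). t ^ napkinless (run_W n d (trap_state n d (Suc j) (p = d) S' T') ps))"
proof -
  have "card S + (n - 1 - k) - 1 = card S' + (n - 1 - Suc j)"
    using ahead card_trap_step_gaps[OF inv] by (simp add: S'_def j)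
  then show ?thesis
    using run_W_trap_step[OF inv ahead p j] by (simp add: S'_def T'_def)
qed

lemma sum_run_W_trap_state:
  assumes "trap_inv n d k b S T"
  shows "(\<Sum>ps\<in>prefs (card S + (n - 1 - k)). t ^ napkinless (run_W n d (trap_state n d k b S T) ps))
           = t ^ card (trapped_gaps n d S T) * 2 ^ card S * phase_weight t b (n - 1 - k)"
  using assms
proof (induction "n - 1 - k" arbitrary: k b S T rule: less_induct)
  case less
  show ?case
  proof (cases "n \<le> k + 2")
    case True
    then show ?thesis
      by (rule sum_run_W_trap_end[OF less.prems])
  next
    case False
    then have ahead: "k + 2 < n"
      by simp
    define j where "j = (if b then Suc k else k)"
    define S' where "S' = (if b then insert (Suc k) S else S)"
    define T' where "T' p = insert (if p = d then napkin n d (Suc j) else napkin n d j) T" for p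
    define \<tau> where "\<tau> = card (trapped_gaps n d S T)"
    define m where "m = card S + (n - 1 - k) - 1"
    define g where "g p = (\<Sum>ps\<in>prefs m. t ^ napkinless (run_W n d (trap_state n d k b S T) (p # ps)))" for p
    have g: "g p = t ^ (\<tau> + (if b \<and> p \<noteq> d then 1 else 0)) * 2 ^ (card S + (if b then 1 else 0))
        * phase_weight t (p = d) (n - 1 - Suc j)" if p: "p \<in> {d, -d}" for p
    proof -
      have "g p = (\<Sum>ps\<in>prefs (card S' + (n - 1 - Suc j)).
          t ^ napkinless (run_W n d (trap_state n d (Suc j) (p = d) S' (T' p)) ps))"
        unfolding g_def m_def S'_def T'_def by (rule sum_run_W_trap_step[OF less.prems ahead p j_def])
      also have "\<dots> = t ^ card (trapped_gaps n d S' (T' p)) * 2 ^ card S' * phase_weight t (p = d) (n - 1 - Suc j)"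
        unfolding S'_def T'_def using ahead trap_inv_step[OF less.prems ahead j_def]
        by (intro less.hyps) (auto simp: j_def)
      finally show ?thesis
        using card_trapped_gaps_step[OF less.prems ahead j_def] card_trap_step_gaps[OF less.prems]
        by (simp add: \<tau>_def S'_def T'_def)
    qed
    have d: "d \<in> {1, -1}" "d \<noteq> -d"
      using less.prems by (auto simp: trap_inv_def)
    have "card S + (n - 1 - k) = Suc m"
      using ahead by (simp add: m_def)
    then have "(\<Sum>ps\<in>prefs (card S + (n - 1 - k)). t ^ napkinless (run_W n d (trap_state n d k b S T) ps))
        = g (-1) + g 1"
      unfolding g_def by (simp only: sum_prefs_Suc)
    also have "\<dots> = g d + g (-d)"
      using d by auto
    also have "\<dots> = t ^ \<tau> * 2 ^ card S * (2 ^ (if b then 1 else 0) * (phase_weight t True (n - 1 - Suc j)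
        + t ^ (if b then 1 else 0) * phase_weight t False (n - 1 - Suc j)))"
      using g[of d] g[of "-d"] d by (cases b) (simp_all add: algebra_simps)
    also have "\<dots> = t ^ \<tau> * 2 ^ card S * phase_weight t b (n - 1 - k)"
      by (simp only: phase_weight_step[OF ahead j_def])
    finally show ?thesis
      by (simp add: \<tau>_def)
  qed
qed

lemma sum_nu_W_Cons:
  assumes "p \<in> {1, -1}"
  shows "(\<Sum>ps\<in>prefs m. t ^ nu_W (p # ps)) = phase_weight t True m"
proof -
  have "(\<Sum>ps\<in>prefs m. t ^ nu_W (p # ps))
      = (\<Sum>ps\<in>prefs (card ({} :: nat set) + (Suc m - 1 - 0)).
           t ^ napkinless (run_W (Suc m) p (trap_state (Suc m) p 0 True {} {napkin (Suc m) p 0}) ps))"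
    by (intro sum.cong) (auto simp: prefs_def nu_W_Cons_eq_trap_state simp del: nu_W.simps)
  also have "\<dots> = phase_weight t True m"
    using sum_run_W_trap_state[OF trap_inv_initial[OF assms]] by (simp add: trapped_gaps_def)
  finally show ?thesis .
qed

lemma W_poly_Suc: "W_poly (Suc m) t = 2 * phase_weight t True m"
  using sum_nu_W_Cons[where p = "-1" and m = m and t = t] sum_nu_W_Cons[where p = 1 and m = m and t = t]
  by (simp add: W_poly_def sum_prefs_Suc)

section \<open>The generating function\<close>

lemma fps_mult_cubic_recurrence:
  fixes a :: "nat \<Rightarrow> 'a :: comm_ring_1"
  assumes rec: "\<And>m. a (m + 3) = a (m + 2) + \<alpha> * a (m + 1) + \<beta> * a m"
  shows "Abs_fps a * (1 - fps_X - fps_const \<alpha> * fps_X ^ 2 - fps_const \<beta> * fps_X ^ 3)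
           = fps_const (a 0) + fps_const (a 1 - a 0) * fps_X + fps_const (a 2 - a 1 - \<alpha> * a 0) * fps_X ^ 2"
proof (rule fps_ext)
  fix n :: nat
  have expand: "Abs_fps a * (1 - fps_X - fps_const \<alpha> * fps_X ^ 2 - fps_const \<beta> * fps_X ^ 3)
      = Abs_fps a - Abs_fps a * fps_X - fps_const \<alpha> * (Abs_fps a * fps_X ^ 2)
          - fps_const \<beta> * (Abs_fps a * fps_X ^ 3)"
    by (simp add: algebra_simps)
  consider "n = 0" | "n = 1" | "n = 2" | m where "n = m + 3"
    by atomize_elim presburger
  then show "(Abs_fps a * (1 - fps_X - fps_const \<alpha> * fps_X ^ 2 - fps_const \<beta> * fps_X ^ 3)) $ n
      = (fps_const (a 0) + fps_const (a 1 - a 0) * fps_X + fps_const (a 2 - a 1 - \<alpha> * a 0) * fps_X ^ 2) $ n"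
    by cases (simp_all add: expand fps_X_power_mult_right_nth rec)
qed

lemma W_gf_nth: "W_gf t $ n = (if n = 0 then 2 else 2 * phase_weight t True (n - 1))"
  by (cases n) (simp_all add: W_gf_def W_poly_Suc)

lemma W_gf_nth_rec:
  "W_gf t $ (m + 3) = W_gf t $ (m + 2) + 2 * W_gf t $ (m + 1) + 2 * (t - 1) * W_gf t $ m"
proof (cases m)
  case 0
  then show ?thesis
    by (simp add: W_gf_nth numeral_3_eq_3 numeral_2_eq_2 algebra_simps)
next
  case (Suc j)
  then show ?thesis
    using phase_weight_True_rec[of t j] by (simp add: W_gf_nth algebra_simps)
qed

lemma W_gf_mult_denominator:
  "W_gf t * (1 - fps_X - 2 * fps_X ^ 2 - 2 * fps_const (t - 1) * fps_X ^ 3) = 2 - 2 * fps_X ^ 2"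
proof -
  have "(1 - fps_X - 2 * fps_X ^ 2 - 2 * fps_const (t - 1) * fps_X ^ 3 :: real fps)
      = 1 - fps_X - fps_const 2 * fps_X ^ 2 - fps_const (2 * (t - 1)) * fps_X ^ 3"
    by (simp add: fps_numeral_fps_const fps_const_mult[symmetric])
  then have "W_gf t * (1 - fps_X - 2 * fps_X ^ 2 - 2 * fps_const (t - 1) * fps_X ^ 3)
      = fps_const (W_gf t $ 0) + fps_const (W_gf t $ 1 - W_gf t $ 0) * fps_X
        + fps_const (W_gf t $ 2 - W_gf t $ 1 - 2 * W_gf t $ 0) * fps_X ^ 2"
    using fps_mult_cubic_recurrence[of "fps_nth (W_gf t)", OF W_gf_nth_rec]
    by (simp only: fps_nth_inverse)
  also have "\<dots> = fps_const 2 + fps_const 0 * fps_X + fps_const (- 2) * fps_X ^ 2"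
    by (simp add: W_gf_nth numeral_2_eq_2)
  also have "\<dots> = 2 - 2 * fps_X ^ 2"
    by (simp add: fps_numeral_fps_const flip: fps_const_neg)
  finally show ?thesis .
qed

theorem corollary3:
  fixes t :: real
  shows "W_gf t = (2 - 2 * fps_X ^ 2) /
                  (1 - fps_X - 2 * fps_X ^ 2 - 2 * fps_const (t - 1) * fps_X ^ 3)"
proof -
  have "(1 - fps_X - 2 * fps_X ^ 2 - 2 * fps_const (t - 1) * fps_X ^ 3 :: real fps) $ 0 = 1"
    by simp
  then have "(1 - fps_X - 2 * fps_X ^ 2 - 2 * fps_const (t - 1) * fps_X ^ 3 :: real fps) \<noteq> 0"
    by (metis fps_zero_nth zero_neq_one)
  then show ?thesis
    using W_gf_mult_denominator[of t] by (metis nonzero_mult_div_cancel_right)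
qed

end
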